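(* Let $\{X_t\}_{t\ge0}$ be a real-valued symmetric Lévy process with transition densities $p_t$ and semigroup $(P_tf)(x)=\int_{\mathbf{R}}p_t(y-x)f(y)\,dy$, and let $u_0:\mathbf{R}\to\mathbf{R}_+$ be bounded measurable. Let $\vartheta:\mathbf{R}\to\mathbf{R}_+$ be a weight. Then for all $\beta>0$ and all even integers $\nu\ge2$, $$\mathcal{N}_{\beta,\nu,\vartheta}(P_\bullet u_0)\le\mathcal{N}_{\beta,\nu,\vartheta}(u_0)\cdot\sup_{t\ge0}\big(e^{-\beta t}\,\mathrm{E}\,\vartheta(X_t)\big)^{1/2}.$$ In particular, if $\mathrm{E}e^{cX_1}<\infty$ for some $c\in\mathbf{R}$ and $\vartheta_c(x):=e^{cx}$, then for all $\beta>\ln\mathrm{E}e^{cX_1}$, $\mathcal{N}_{\beta,\nu,\vartheta_c}(P_\bullet u_0)\le\mathcal{N}_{\beta,\nu,\vartheta_c}(u_0)$.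
   Context: A weight is a measurable $\vartheta:\mathbf{R}\to\mathbf{R}_+$ with $\vartheta(a+b)\le\vartheta(a)\vartheta(b)$ for all $a,b\in\mathbf{R}$. For a (possibly random, possibly time-dependent) field $v$, $\mathcal{N}_{\beta,\nu,\vartheta}(v):=\big[\sup_{t\ge0}\sup_{x\in\mathbf{R}}e^{-\beta t}\vartheta(x)\|v_t(x)\|_\nu^2\big]^{1/2}$, with $\|Y\|_\nu:=(\mathrm{E}|Y|^\nu)^{1/\nu}$; $u_0$ is regarded as the time-independent field $(t,x)\mapsto u_0(x)$, and $P_\bullet u_0$ denotes the field $(t,x)\mapsto(P_tu_0)(x)$. *)

theory Defs
  imports "HOL-Probability.Probability"
begin

definition levy_process :: "'a measure \<Rightarrow> (real \<Rightarrow> 'a \<Rightarrow> real) \<Rightarrow> bool" where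
  "levy_process M X \<longleftrightarrow>
     prob_space M \<and>
     (\<forall>t\<ge>0. X t \<in> borel_measurable M) \<and>
     (AE \<omega> in M. X 0 \<omega> = 0) \<and>
     (\<forall>ts::real list. \<forall>n. length ts = Suc n \<longrightarrow> sorted ts \<longrightarrow> (\<forall>s\<in>set ts. 0 \<le> s) \<longrightarrow>
        prob_space.indep_vars M (\<lambda>_. borel) (\<lambda>i \<omega>. X (ts ! Suc i) \<omega> - X (ts ! i) \<omega>) {..<n}) \<and>
     (\<forall>s\<ge>0. \<forall>t\<ge>0. distr M borel (\<lambda>\<omega>. X (s + t) \<omega> - X s \<omega>) = distr M borel (X t)) \<and>
     (\<forall>\<epsilon>>0. ((\<lambda>t. measure M {\<omega>\<in>space M. \<epsilon> < \<bar>X t \<omega>\<bar>}) \<longlongrightarrow> 0) (at_right 0)) \<and>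
     (AE \<omega> in M. \<forall>t\<ge>0. continuous (at_right t) (\<lambda>s. X s \<omega>) \<and>
                        (0 < t \<longrightarrow> (\<exists>l. ((\<lambda>s. X s \<omega>) \<longlongrightarrow> l) (at_left t))))"

definition symmetric_levy_with_densities ::
  "'a measure \<Rightarrow> (real \<Rightarrow> 'a \<Rightarrow> real) \<Rightarrow> (real \<Rightarrow> real \<Rightarrow> real) \<Rightarrow> bool" where
  "symmetric_levy_with_densities M X p \<longleftrightarrow>
     levy_process M X \<and>
     (\<forall>t\<ge>0. distr M borel (\<lambda>\<omega>. - X t \<omega>) = distr M borel (X t)) \<and>
     (\<forall>t>0. (\<forall>x. 0 \<le> p t x) \<and> distributed M lborel (X t) (\<lambda>x. ennreal (p t x)))"

definition levy_semigroup :: "(real \<Rightarrow> real \<Rightarrow> real) \<Rightarrow> real \<Rightarrow> (real \<Rightarrow> real) \<Rightarrow> real \<Rightarrow> real" where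
  "levy_semigroup p t f x = (if t = 0 then f x else \<integral>y. p t (y - x) * f y \<partial>lborel)"

definition weight :: "(real \<Rightarrow> real) \<Rightarrow> bool" where
  "weight \<theta> \<longleftrightarrow> \<theta> \<in> borel_measurable borel \<and> (\<forall>x. 0 \<le> \<theta> x) \<and>
     (\<forall>a b. \<theta> (a + b) \<le> \<theta> a * \<theta> b)"

definition Lnorm :: "'a measure \<Rightarrow> nat \<Rightarrow> ('a \<Rightarrow> real) \<Rightarrow> real" where
  "Lnorm M \<nu> Y = (\<integral>\<omega>. \<bar>Y \<omega>\<bar> ^ \<nu> \<partial>M) powr (1 / real \<nu>)"

definition ennreal_sqrt :: "ennreal \<Rightarrow> ennreal" where
  "ennreal_sqrt z = (if z = \<infinity> then \<infinity> else ennreal (sqrt (enn2real z)))"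

definition Nnorm :: "'a measure \<Rightarrow> real \<Rightarrow> nat \<Rightarrow> (real \<Rightarrow> real) \<Rightarrow> (real \<Rightarrow> real \<Rightarrow> 'a \<Rightarrow> real) \<Rightarrow> ennreal" where
  "Nnorm M \<beta> \<nu> \<theta> v = ennreal_sqrt
     (SUP t\<in>{0..}. SUP x. ennreal (exp (- \<beta> * t) * \<theta> x * (Lnorm M \<nu> (v t x))\<^sup>2))"

end

theory Submission
  imports Defs
begin

text \<open>
  The semigroup is an expectation, \<open>P\<^sub>t f (x) = E f (x + X\<^sub>t)\<close>, by the change of variables
  \<open>y = x + z\<close> in its density formula. Jensen's inequality gives
  \<open>(P\<^sub>t f (x))\<^sup>2 \<le> E f (x + X\<^sub>t)\<^sup>2\<close>, and submultiplicativity of the weight gives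
  \<open>\<theta> x \<le> \<theta> (x + X\<^sub>t) \<theta> (- X\<^sub>t)\<close>; hence \<open>\<theta> x (P\<^sub>t f (x))\<^sup>2\<close> is at most
  \<open>sup\<^sub>y \<theta> y f(y)\<^sup>2\<close> times \<open>E \<theta> (- X\<^sub>t) = E \<theta> (X\<^sub>t)\<close>, the last equality by symmetry.
  For deterministic fields the \<open>L\<^sup>\<nu>\<close> norm is the absolute value, so neither the parity of
  \<open>\<nu>\<close> nor the sign of \<open>u\<^sub>0\<close> plays a role.

  For the exponential weight it remains to show \<open>E exp (c X\<^sub>t) \<le> exp (\<beta> t)\<close> from the case \<open>t = 1\<close>.
  Independent stationary increments make \<open>t \<mapsto> E exp (c X\<^sub>t)\<close> multiplicative, which gives the
  bound at rational times by taking \<open>n\<close>-th powers; right-continuity of the paths and Fatou's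
  lemma along rationals decreasing to \<open>t\<close> extend it to all \<open>t \<ge> 0\<close>.
\<close>

lemma ennreal_sqrt_mono: "a \<le> b \<Longrightarrow> ennreal_sqrt a \<le> ennreal_sqrt b"
  by (cases a; cases b) (auto simp: ennreal_sqrt_def top_unique)

lemma ennreal_sqrt_mult: "ennreal_sqrt (a * b) = ennreal_sqrt a * ennreal_sqrt b"
  by (cases a; cases b) (auto simp: ennreal_sqrt_def ennreal_mult_top ennreal_top_mult
        ennreal_mult[symmetric] real_sqrt_mult)

lemma ennreal_sqrt_le_1: "a \<le> 1 \<Longrightarrow> ennreal_sqrt a \<le> 1"
  using ennreal_sqrt_mono[of a 1] by (simp add: ennreal_sqrt_def)

lemma ennreal_power_le_imp_le_base:
  fixes a b :: ennreal
  assumes le: "a ^ n \<le> b ^ n" and n: "0 < n"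
  shows "a \<le> b"
proof (cases b)
  case (real y)
  show ?thesis
  proof (cases a)
    case (real x)
    then have "x ^ n \<le> y ^ n"
      using le \<open>b = ennreal y\<close> \<open>0 \<le> y\<close> by (simp add: ennreal_power)
    then show ?thesis
      using real \<open>b = ennreal y\<close> power_mono_iff[OF \<open>0 \<le> x\<close> \<open>0 \<le> y\<close> n]
      by (simp add: ennreal_leI)
  next
    case top
    then show ?thesis
      using le n \<open>b = ennreal y\<close> by (metis power_eq_top_ennreal power_top_ennreal top_unique)
  qed
qed simp

lemma ennreal_le_exp_if_ln_less:
  assumes "m < \<infinity>" and "ln (enn2real m) < \<beta>"
  shows "m \<le> ennreal (exp \<beta>)"
proof -
  have "enn2real m \<le> exp \<beta>"
  proof (cases "enn2real m = 0")
    case False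
    then have "enn2real m = exp (ln (enn2real m))"
      by (intro exp_ln[symmetric]) (simp add: order.strict_iff_order)
    also have "\<dots> < exp \<beta>" using assms(2) by simp
    finally show ?thesis by simp
  qed simp
  then show ?thesis
    using assms(1) by (cases m) (simp_all add: ennreal_leI)
qed

lemma (in prob_space) Lnorm_const:
  assumes "0 < \<nu>"
  shows "Lnorm M \<nu> (\<lambda>_. c) = \<bar>c\<bar>"
  using assms by (cases "c = 0")
    (simp_all add: Lnorm_def prob_space powr_realpow[symmetric] powr_powr)

lemma (in prob_space) square_expectation_le:
  fixes Y :: "'a \<Rightarrow> real"
  assumes "integrable M Y" and "integrable M (\<lambda>\<omega>. (Y \<omega>)\<^sup>2)"
  shows "(expectation Y)\<^sup>2 \<le> expectation (\<lambda>\<omega>. (Y \<omega>)\<^sup>2)"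
  using variance_eq[OF assms] variance_positive[of Y] by linarith

lemma nn_integral_eq_if_distr_eq:
  assumes "distr M borel Y = distr M borel Z"
    and "Y \<in> borel_measurable M" "Z \<in> borel_measurable M" "g \<in> borel_measurable borel"
  shows "(\<integral>\<^sup>+\<omega>. g (Y \<omega>) \<partial>M) = (\<integral>\<^sup>+\<omega>. g (Z \<omega>) \<partial>M)"
proof -
  have "(\<integral>\<^sup>+\<omega>. g (Y \<omega>) \<partial>M) = (\<integral>\<^sup>+y. g y \<partial>distr M borel Y)"
    using assms(2-4) by (simp add: nn_integral_distr)
  also have "\<dots> = (\<integral>\<^sup>+y. g y \<partial>distr M borel Z)" by (simp only: assms(1))
  also have "\<dots> = (\<integral>\<^sup>+\<omega>. g (Z \<omega>) \<partial>M)"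
    using assms(2-4) by (simp add: nn_integral_distr)
  finally show ?thesis .
qed

lemma weight_le_shift:
  assumes "weight \<theta>"
  shows "\<theta> x \<le> \<theta> (x + z) * \<theta> (- z)"
  using assms unfolding weight_def by (metis add_diff_cancel_right' diff_minus_eq_add)

lemma weight_eq_0_if_at_0:
  assumes "weight \<theta>" and "\<theta> 0 = 0"
  shows "\<theta> x = 0"
proof -
  have "\<theta> x \<le> \<theta> x * \<theta> 0" and "0 \<le> \<theta> x"
    using assms(1) unfolding weight_def by (metis add.right_neutral, blast)
  then show ?thesis using assms(2) by simp
qed

lemma weight_exp: "weight (\<lambda>x. exp (c * x))"
  unfolding weight_def by (auto simp: distrib_left exp_add)

lemma levy_process_prob_space: "levy_process M X \<Longrightarrow> prob_space M"
  by (simp add: levy_process_def)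

lemma levy_process_measurable: "levy_process M X \<Longrightarrow> 0 \<le> t \<Longrightarrow> X t \<in> borel_measurable M"
  by (simp add: levy_process_def)

lemma levy_process_AE_start: "levy_process M X \<Longrightarrow> AE \<omega> in M. X 0 \<omega> = 0"
  by (simp add: levy_process_def)

lemma levy_process_indep_increments:
  assumes "levy_process M X" and "0 \<le> s" and "0 \<le> t"
  shows "prob_space.indep_vars M (\<lambda>_. borel)
           (\<lambda>i \<omega>. X ([0, s, s + t] ! Suc i) \<omega> - X ([0, s, s + t] ! i) \<omega>) {..<2}"
  using assms unfolding levy_process_def
  by (elim conjE) (drule spec[of _ "[0, s, s + t]"], drule spec[of _ 2], auto)

lemma levy_process_nn_integral_increment:
  assumes L: "levy_process M X" and s: "0 \<le> s" and t: "0 \<le> t"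
    and g: "g \<in> borel_measurable borel"
  shows "(\<integral>\<^sup>+\<omega>. g (X (s + t) \<omega> - X s \<omega>) \<partial>M) = (\<integral>\<^sup>+\<omega>. g (X t \<omega>) \<partial>M)"
proof (rule nn_integral_eq_if_distr_eq[OF _ _ _ g])
  show "distr M borel (\<lambda>\<omega>. X (s + t) \<omega> - X s \<omega>) = distr M borel (X t)"
    using L s t unfolding levy_process_def by blast
  show "(\<lambda>\<omega>. X (s + t) \<omega> - X s \<omega>) \<in> borel_measurable M" "X t \<in> borel_measurable M"
    using levy_process_measurable[OF L] s t by (auto intro: borel_measurable_diff)
qed

lemma levy_process_AE_right_continuous:
  "levy_process M X \<Longrightarrow> AE \<omega> in M. \<forall>t\<ge>0. continuous (at_right t) (\<lambda>s. X s \<omega>)"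
  unfolding levy_process_def by (elim conjE) (erule AE_mp, auto)

lemma symmetric_levy_levy_process: "symmetric_levy_with_densities M X p \<Longrightarrow> levy_process M X"
  by (simp add: symmetric_levy_with_densities_def)

lemma symmetric_levy_nn_integral_uminus:
  assumes levy: "symmetric_levy_with_densities M X p" and t: "0 \<le> t"
    and g: "g \<in> borel_measurable borel"
  shows "(\<integral>\<^sup>+\<omega>. g (- X t \<omega>) \<partial>M) = (\<integral>\<^sup>+\<omega>. g (X t \<omega>) \<partial>M)"
proof (rule nn_integral_eq_if_distr_eq[OF _ _ _ g])
  show "distr M borel (\<lambda>\<omega>. - X t \<omega>) = distr M borel (X t)"
    using levy t by (simp add: symmetric_levy_with_densities_def)
  show "(\<lambda>\<omega>. - X t \<omega>) \<in> borel_measurable M" "X t \<in> borel_measurable M"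
    using levy_process_measurable[OF symmetric_levy_levy_process[OF levy] t] by auto
qed

lemma levy_semigroup_eq_expectation:
  assumes levy: "symmetric_levy_with_densities M X p"
    and f: "f \<in> borel_measurable borel" and t: "0 \<le> t"
  shows "levy_semigroup p t f x = (\<integral>\<omega>. f (x + X t \<omega>) \<partial>M)"
proof -
  have L: "levy_process M X" using symmetric_levy_levy_process[OF levy] .
  interpret prob_space M using levy_process_prob_space[OF L] .
  have [measurable]: "X t \<in> borel_measurable M" "f \<in> borel_measurable borel"
    using levy_process_measurable[OF L t] f .
  show ?thesis
  proof (cases "t = 0")
    case True
    have "(\<integral>\<omega>. f (x + X t \<omega>) \<partial>M) = (\<integral>\<omega>. f x \<partial>M)"
      using levy_process_AE_start[OF L] True by (intro integral_cong_AE) (measurable, auto)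
    then show ?thesis using True by (simp add: levy_semigroup_def prob_space)
  next
    case False
    with t have "distributed M lborel (X t) (\<lambda>x. ennreal (p t x))" and "\<forall>x. 0 \<le> p t x"
      using levy by (auto simp: symmetric_levy_with_densities_def)
    then have "(\<integral>z. p t z * f (x + z) \<partial>lborel) = (\<integral>\<omega>. f (x + X t \<omega>) \<partial>M)"
      using f by (intro distributed_integral) auto
    moreover have "(\<integral>y. p t (y - x) * f y \<partial>lborel) = (\<integral>z. p t z * f (x + z) \<partial>lborel)"
      using lborel_integral_real_affine[of 1 "\<lambda>y. p t (y - x) * f y" x] by simp
    ultimately show ?thesis using False by (simp add: levy_semigroup_def)
  qed
qed

lemma weighted_square_semigroup_le:
  assumes levy: "symmetric_levy_with_densities M X p"
    and f: "f \<in> borel_measurable borel" and f_bdd: "bounded (range f)"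
    and wt: "weight \<theta>" and t: "0 \<le> t"
    and s: "\<And>y. \<theta> y * (f y)\<^sup>2 \<le> s"
  shows "ennreal (\<theta> x * (levy_semigroup p t f x)\<^sup>2) \<le> ennreal s * (\<integral>\<^sup>+\<omega>. ennreal (\<theta> (X t \<omega>)) \<partial>M)"
proof -
  have L: "levy_process M X" using symmetric_levy_levy_process[OF levy] .
  interpret prob_space M using levy_process_prob_space[OF L] .
  have [measurable]: "X t \<in> borel_measurable M" "f \<in> borel_measurable borel" "\<theta> \<in> borel_measurable borel"
    using levy_process_measurable[OF L t] f wt by (auto simp: weight_def)
  have \<theta>_nonneg: "0 \<le> \<theta> y" for y using wt by (simp add: weight_def)
  obtain B where B: "\<And>y. \<bar>f y\<bar> \<le> B"
    using f_bdd unfolding bounded_iff by auto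
  define Y where "Y \<omega> = f (x + X t \<omega>)" for \<omega>
  have [measurable]: "Y \<in> borel_measurable M" unfolding Y_def by measurable
  have Y: "integrable M Y"
    by (rule integrable_const_bound[where B=B]) (auto simp: Y_def B)
  have Y2: "integrable M (\<lambda>\<omega>. (Y \<omega>)\<^sup>2)"
  proof (rule integrable_const_bound[where B="B\<^sup>2"])
    show "AE \<omega> in M. norm ((Y \<omega>)\<^sup>2) \<le> B\<^sup>2"
      using power_mono[OF B, of _ 2] by (simp add: Y_def)
  qed simp
  have "(levy_semigroup p t f x)\<^sup>2 \<le> expectation (\<lambda>\<omega>. (Y \<omega>)\<^sup>2)"
    using square_expectation_le[OF Y Y2] levy_semigroup_eq_expectation[OF levy f t]
    by (simp add: Y_def)
  then have "ennreal (\<theta> x * (levy_semigroup p t f x)\<^sup>2)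
      \<le> ennreal (\<theta> x) * ennreal (expectation (\<lambda>\<omega>. (Y \<omega>)\<^sup>2))"
    using \<theta>_nonneg[of x] by (simp add: ennreal_mult[symmetric] ennreal_leI mult_left_mono)
  also have "\<dots> = ennreal (\<theta> x) * (\<integral>\<^sup>+\<omega>. ennreal ((Y \<omega>)\<^sup>2) \<partial>M)"
    using Y2 by (simp add: nn_integral_eq_integral)
  also have "\<dots> = (\<integral>\<^sup>+\<omega>. ennreal (\<theta> x * (Y \<omega>)\<^sup>2) \<partial>M)"
    using \<theta>_nonneg[of x] by (simp add: nn_integral_cmult[symmetric] ennreal_mult)
  also have "\<dots> \<le> (\<integral>\<^sup>+\<omega>. ennreal s * ennreal (\<theta> (- X t \<omega>)) \<partial>M)"
  proof (rule nn_integral_mono)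
    fix \<omega>
    let ?z = "X t \<omega>"
    have "\<theta> x * (Y \<omega>)\<^sup>2 \<le> \<theta> (x + ?z) * \<theta> (- ?z) * (f (x + ?z))\<^sup>2"
      using weight_le_shift[OF wt] by (simp add: Y_def mult_right_mono)
    also have "\<dots> = \<theta> (- ?z) * (\<theta> (x + ?z) * (f (x + ?z))\<^sup>2)" by (simp only: ac_simps)
    also have "\<dots> \<le> \<theta> (- ?z) * s" using s \<theta>_nonneg by (intro mult_left_mono) auto
    finally show "ennreal (\<theta> x * (Y \<omega>)\<^sup>2) \<le> ennreal s * ennreal (\<theta> (- ?z))"
      using \<theta>_nonneg by (simp add: ennreal_mult''[symmetric] ennreal_leI mult.commute)
  qed
  also have "\<dots> = ennreal s * (\<integral>\<^sup>+\<omega>. ennreal (\<theta> (- X t \<omega>)) \<partial>M)"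
    by (rule nn_integral_cmult) simp
  also have "(\<integral>\<^sup>+\<omega>. ennreal (\<theta> (- X t \<omega>)) \<partial>M) = (\<integral>\<^sup>+\<omega>. ennreal (\<theta> (X t \<omega>)) \<partial>M)"
    by (rule symmetric_levy_nn_integral_uminus[OF levy t]) simp
  finally show ?thesis .
qed

lemma levy_process_SUP_weight_moment_ge:
  assumes L: "levy_process M X"
  shows "ennreal (\<theta> 0) \<le> (SUP t\<in>{0..}. ennreal (exp (- \<beta> * t)) * (\<integral>\<^sup>+\<omega>. ennreal (\<theta> (X t \<omega>)) \<partial>M))"
proof -
  interpret prob_space M using levy_process_prob_space[OF L] .
  have "(\<integral>\<^sup>+\<omega>. ennreal (\<theta> (X 0 \<omega>)) \<partial>M) = (\<integral>\<^sup>+\<omega>. ennreal (\<theta> 0) \<partial>M)"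
    using levy_process_AE_start[OF L] by (intro nn_integral_cong_AE) auto
  then show ?thesis
    by (intro SUP_upper2[where i=0]) (simp_all add: emeasure_space_1)
qed

lemma Nnorm_levy_semigroup_le:
  assumes levy: "symmetric_levy_with_densities M X p"
    and f: "f \<in> borel_measurable borel" and f_bdd: "bounded (range f)"
    and wt: "weight \<theta>" and \<nu>: "0 < \<nu>"
  shows "Nnorm M \<beta> \<nu> \<theta> (\<lambda>t x \<omega>. levy_semigroup p t f x)
           \<le> Nnorm M \<beta> \<nu> \<theta> (\<lambda>t x \<omega>. f x) *
              ennreal_sqrt (SUP t\<in>{0..}. ennreal (exp (- \<beta> * t)) * (\<integral>\<^sup>+\<omega>. ennreal (\<theta> (X t \<omega>)) \<partial>M))"
proof -
  have L: "levy_process M X" using symmetric_levy_levy_process[OF levy] .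
  interpret prob_space M using levy_process_prob_space[OF L] .
  have Lnorm_sq: "(Lnorm M \<nu> (\<lambda>_. c))\<^sup>2 = c\<^sup>2" for c
    using Lnorm_const[OF \<nu>] by simp
  have \<theta>_nonneg: "0 \<le> \<theta> y" for y using wt by (simp add: weight_def)
  define S where "S = (SUP t\<in>{0..}. SUP x. ennreal (exp (- \<beta> * t) * \<theta> x * (Lnorm M \<nu> (\<lambda>\<omega>. f x))\<^sup>2))"
  define G where "G = (SUP t\<in>{0..}. ennreal (exp (- \<beta> * t)) * (\<integral>\<^sup>+\<omega>. ennreal (\<theta> (X t \<omega>)) \<partial>M))"
  have S_ge: "ennreal (\<theta> y * (f y)\<^sup>2) \<le> S" for y
  proof -
    have "ennreal (\<theta> y * (f y)\<^sup>2) = ennreal (exp (- \<beta> * 0) * \<theta> y * (Lnorm M \<nu> (\<lambda>\<omega>. f y))\<^sup>2)"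
      by (simp add: Lnorm_sq)
    also have "\<dots> \<le> S" unfolding S_def by (rule SUP_upper2[where i=0]) (auto intro: SUP_upper)
    finally show ?thesis .
  qed
  have G_ge: "ennreal (exp (- \<beta> * t)) * (\<integral>\<^sup>+\<omega>. ennreal (\<theta> (X t \<omega>)) \<partial>M) \<le> G" if "0 \<le> t" for t
    unfolding G_def using that by (intro SUP_upper) simp
  have "ennreal (exp (- \<beta> * t) * \<theta> x * (levy_semigroup p t f x)\<^sup>2) \<le> S * G"
    if t: "0 \<le> t" for t x
  proof (cases "S = \<top>")
    case True
    \<comment> \<open>then \<open>S * G = \<top>\<close>, because the \<open>t = 0\<close> term gives \<open>G \<ge> \<theta> 0\<close>, unless \<open>\<theta> = 0\<close>\<close>
    show ?thesis
    proof (cases "\<theta> 0 = 0")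
      case True
      then show ?thesis using weight_eq_0_if_at_0[OF wt] by simp
    next
      case False
      then have "G \<noteq> 0"
        using levy_process_SUP_weight_moment_ge[OF L, of \<theta> \<beta>] \<theta>_nonneg[of 0]
        unfolding G_def by auto
      then show ?thesis using \<open>S = \<top>\<close> by (simp add: ennreal_top_mult)
    qed
  next
    case False
    then obtain s where S: "S = ennreal s" and "0 \<le> s" by (cases S) auto
    then have "\<theta> y * (f y)\<^sup>2 \<le> s" for y using S_ge[of y] by simp
    note pointwise = weighted_square_semigroup_le[OF levy f f_bdd wt t this]
    have "ennreal (exp (- \<beta> * t) * \<theta> x * (levy_semigroup p t f x)\<^sup>2)
        = ennreal (exp (- \<beta> * t)) * ennreal (\<theta> x * (levy_semigroup p t f x)\<^sup>2)"
      using \<theta>_nonneg[of x] by (simp add: ennreal_mult mult.assoc)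
    also have "\<dots> \<le> S * (ennreal (exp (- \<beta> * t)) * (\<integral>\<^sup>+\<omega>. ennreal (\<theta> (X t \<omega>)) \<partial>M))"
      using mult_left_mono[OF pointwise, of "ennreal (exp (- \<beta> * t))"]
      by (simp add: S mult.left_commute)
    also have "\<dots> \<le> S * G" by (intro mult_left_mono G_ge t) simp
    finally show ?thesis .
  qed
  then have "(SUP t\<in>{0..}. SUP x. ennreal (exp (- \<beta> * t) * \<theta> x *
               (Lnorm M \<nu> (\<lambda>\<omega>. levy_semigroup p t f x))\<^sup>2)) \<le> S * G"
    by (intro SUP_least) (auto simp: Lnorm_sq)
  then show ?thesis
    unfolding Nnorm_def S_def[symmetric] G_def[symmetric] ennreal_sqrt_mult[symmetric]
    by (rule ennreal_sqrt_mono)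
qed

abbreviation exp_moment :: "'a measure \<Rightarrow> (real \<Rightarrow> 'a \<Rightarrow> real) \<Rightarrow> real \<Rightarrow> real \<Rightarrow> ennreal" where
  "exp_moment M X c t \<equiv> \<integral>\<^sup>+\<omega>. ennreal (exp (c * X t \<omega>)) \<partial>M"

lemma levy_process_exp_moment_add:
  assumes L: "levy_process M X" and s: "0 \<le> s" and t: "0 \<le> t"
  shows "exp_moment M X c (s + t) = exp_moment M X c s * exp_moment M X c t"
proof -
  interpret prob_space M using levy_process_prob_space[OF L] .
  have [measurable]: "X 0 \<in> borel_measurable M" "X s \<in> borel_measurable M"
    "X t \<in> borel_measurable M" "X (s + t) \<in> borel_measurable M"
    using s t by (auto intro: levy_process_measurable[OF L])
  define D where "D i \<omega> = X ([0, s, s + t] ! Suc i) \<omega> - X ([0, s, s + t] ! i) \<omega>" for i \<omega>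
  have D: "D 0 = (\<lambda>\<omega>. X s \<omega> - X 0 \<omega>)" "D 1 = (\<lambda>\<omega>. X (s + t) \<omega> - X s \<omega>)"
    by (simp_all add: D_def fun_eq_iff)
  have "indep_vars (\<lambda>_. borel) (\<lambda>i \<omega>. ennreal (exp (c * D i \<omega>))) {..<2}"
    unfolding D_def by (rule indep_vars_compose2[OF levy_process_indep_increments[OF L s t]]) simp
  then have "(\<integral>\<^sup>+\<omega>. (\<Prod>i<2. ennreal (exp (c * D i \<omega>))) \<partial>M)
      = (\<Prod>i<2. \<integral>\<^sup>+\<omega>. ennreal (exp (c * D i \<omega>)) \<partial>M)"
    by (intro indep_vars_nn_integral) auto
  moreover have "(\<integral>\<^sup>+\<omega>. (\<Prod>i<2. ennreal (exp (c * D i \<omega>))) \<partial>M) = exp_moment M X c (s + t)"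
    using levy_process_AE_start[OF L]
    by (intro nn_integral_cong_AE) (auto simp: D_def numeral_2_eq_2 lessThan_Suc
        ennreal_mult[symmetric] exp_add[symmetric] algebra_simps)
  moreover have "(\<integral>\<^sup>+\<omega>. ennreal (exp (c * D 0 \<omega>)) \<partial>M) = exp_moment M X c s"
    using levy_process_AE_start[OF L] by (intro nn_integral_cong_AE) (auto simp: D)
  moreover have "(\<integral>\<^sup>+\<omega>. ennreal (exp (c * D 1 \<omega>)) \<partial>M) = exp_moment M X c t"
    unfolding D by (rule levy_process_nn_integral_increment[OF L s t]) simp
  ultimately show ?thesis by (simp add: numeral_2_eq_2 lessThan_Suc mult.commute)
qed

lemma levy_process_exp_moment_of_nat_mult:
  assumes L: "levy_process M X" and a: "0 \<le> a"
  shows "exp_moment M X c (real n * a) = exp_moment M X c a ^ n"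
proof (induction n)
  case 0
  interpret prob_space M using levy_process_prob_space[OF L] .
  have "exp_moment M X c 0 = (\<integral>\<^sup>+\<omega>. 1 \<partial>M)"
    using levy_process_AE_start[OF L] by (intro nn_integral_cong_AE) auto
  then show ?case by (simp add: emeasure_space_1)
next
  case (Suc n)
  have "real (Suc n) * a = a + real n * a" by (simp add: algebra_simps)
  then show ?case using levy_process_exp_moment_add[OF L a, of "real n * a" c] Suc a by simp
qed

lemma levy_process_exp_moment_rational_le:
  assumes L: "levy_process M X"
    and one: "exp_moment M X c 1 \<le> ennreal (exp \<beta>)" and n: "0 < n"
  shows "exp_moment M X c (real k / real n) \<le> ennreal (exp (\<beta> * (real k / real n)))"
proof (rule ennreal_power_le_imp_le_base[OF _ n])
  have "exp_moment M X c (real k / real n) ^ n = exp_moment M X c (real k * 1)"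
    using levy_process_exp_moment_of_nat_mult[OF L, of "real k / real n" c n] n by simp
  also have "\<dots> = exp_moment M X c 1 ^ k"
    using levy_process_exp_moment_of_nat_mult[OF L, of 1 c k] by simp
  also have "\<dots> \<le> ennreal (exp \<beta>) ^ k" using one by (rule power_mono) simp
  also have "\<dots> = ennreal (exp (\<beta> * (real k / real n))) ^ n"
    using n by (simp add: ennreal_power exp_of_nat_mult[symmetric])
  finally show "exp_moment M X c (real k / real n) ^ n \<le> ennreal (exp (\<beta> * (real k / real n))) ^ n" .
qed

lemma upper_rational_approx_at_right:
  fixes t :: real
  assumes "0 \<le> t"
  shows "filterlim (\<lambda>j. real (nat (\<lfloor>real (Suc j) * t\<rfloor> + 1)) / real (Suc j)) (at_right t) sequentially"
proof -
  define r where "r j = real (nat (\<lfloor>real (Suc j) * t\<rfloor> + 1)) / real (Suc j)" for j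
  have k: "real (nat (\<lfloor>real (Suc j) * t\<rfloor> + 1)) = of_int \<lfloor>real (Suc j) * t\<rfloor> + 1" for j
    using assms by simp
  have gt: "t < r j" for j
  proof -
    have "real (Suc j) * t < real (nat (\<lfloor>real (Suc j) * t\<rfloor> + 1))"
      using k[of j] real_of_int_floor_add_one_gt[of "real (Suc j) * t"] by linarith
    then show ?thesis unfolding r_def by (simp add: field_simps)
  qed
  have le: "r j \<le> t + 1 / real (Suc j)" for j
  proof -
    have "real (nat (\<lfloor>real (Suc j) * t\<rfloor> + 1)) \<le> real (Suc j) * t + 1"
      using k[of j] of_int_floor_le[of "real (Suc j) * t"] by linarith
    then have "r j \<le> (real (Suc j) * t + 1) / real (Suc j)"
      unfolding r_def by (rule divide_right_mono) simp
    also have "\<dots> = t + 1 / real (Suc j)" by (simp add: field_simps)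
    finally show ?thesis .
  qed
  have "(\<lambda>j. t + 1 / real (Suc j)) \<longlonglongrightarrow> t"
    using tendsto_add[OF tendsto_const LIMSEQ_Suc[OF lim_1_over_n], of t] by simp
  from tendsto_sandwich[OF _ _ tendsto_const this] have "r \<longlonglongrightarrow> t"
    using gt le by (auto intro: always_eventually less_imp_le)
  then show ?thesis
    unfolding r_def[abs_def] by (rule tendsto_imp_filterlim_at_right) (use gt[unfolded r_def] in simp)
qed

lemma levy_process_exp_moment_le:
  assumes L: "levy_process M X"
    and one: "exp_moment M X c 1 \<le> ennreal (exp \<beta>)" and t: "0 \<le> t"
  shows "exp_moment M X c t \<le> ennreal (exp (\<beta> * t))"
proof -
  interpret prob_space M using levy_process_prob_space[OF L] .
  define r where "r j = real (nat (\<lfloor>real (Suc j) * t\<rfloor> + 1)) / real (Suc j)" for j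
  have r: "filterlim r (at_right t) sequentially"
    unfolding r_def[abs_def] using upper_rational_approx_at_right[OF t] .
  have [measurable]: "X (r j) \<in> borel_measurable M" for j
    by (rule levy_process_measurable[OF L]) (simp add: r_def)
  have "AE \<omega> in M. (\<lambda>j. ennreal (exp (c * X (r j) \<omega>))) \<longlonglongrightarrow> ennreal (exp (c * X t \<omega>))"
    using levy_process_AE_right_continuous[OF L]
  proof eventually_elim
    case (elim \<omega>)
    then have "((\<lambda>s. X s \<omega>) \<longlongrightarrow> X t \<omega>) (at_right t)" using t by (simp add: continuous_within)
    then have "(\<lambda>j. X (r j) \<omega>) \<longlonglongrightarrow> X t \<omega>" using r by (rule filterlim_compose)
    then show ?case by (intro tendsto_intros)
  qed
  then have "exp_moment M X c t = (\<integral>\<^sup>+\<omega>. liminf (\<lambda>j. ennreal (exp (c * X (r j) \<omega>))) \<partial>M)"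
    by (intro nn_integral_cong_AE) (auto intro!: lim_imp_Liminf[symmetric])
  also have "\<dots> \<le> liminf (\<lambda>j. exp_moment M X c (r j))"
    by (rule nn_integral_liminf) measurable
  also have "\<dots> \<le> liminf (\<lambda>j. ennreal (exp (\<beta> * r j)))"
    unfolding r_def by (intro Liminf_mono always_eventually allI levy_process_exp_moment_rational_le[OF L one]) simp
  also have "\<dots> = ennreal (exp (\<beta> * t))"
    using r by (intro lim_imp_Liminf tendsto_intros) (simp_all add: filterlim_at)
  finally show ?thesis .
qed

theorem lemma2p7:
  fixes M :: "'a measure" and X :: "real \<Rightarrow> 'a \<Rightarrow> real" and p :: "real \<Rightarrow> real \<Rightarrow> real"
    and u0 :: "real \<Rightarrow> real" and \<theta> :: "real \<Rightarrow> real"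
  assumes levy: "symmetric_levy_with_densities M X p"
    and u0_meas: "u0 \<in> borel_measurable borel"
    and u0_nonneg: "\<forall>x. 0 \<le> u0 x"
    and u0_bdd: "bounded (range u0)"
    and wt: "weight \<theta>"
  shows "(\<forall>\<beta>>0. \<forall>\<nu>::nat. even \<nu> \<and> 2 \<le> \<nu> \<longrightarrow>
            Nnorm M \<beta> \<nu> \<theta> (\<lambda>t x \<omega>. levy_semigroup p t u0 x)
              \<le> Nnorm M \<beta> \<nu> \<theta> (\<lambda>t x \<omega>. u0 x) *
                 ennreal_sqrt (SUP t\<in>{0..}. ennreal (exp (- \<beta> * t)) * (\<integral>\<^sup>+\<omega>. ennreal (\<theta> (X t \<omega>)) \<partial>M)))
       \<and> (\<forall>c::real. (\<integral>\<^sup>+\<omega>. ennreal (exp (c * X 1 \<omega>)) \<partial>M) < \<infinity> \<longrightarrow>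
            (\<forall>\<beta>. \<beta> > ln (enn2real (\<integral>\<^sup>+\<omega>. ennreal (exp (c * X 1 \<omega>)) \<partial>M)) \<longrightarrow>
              (\<forall>\<nu>::nat. even \<nu> \<and> 2 \<le> \<nu> \<longrightarrow>
                 Nnorm M \<beta> \<nu> (\<lambda>x. exp (c * x)) (\<lambda>t x \<omega>. levy_semigroup p t u0 x)
                   \<le> Nnorm M \<beta> \<nu> (\<lambda>x. exp (c * x)) (\<lambda>t x \<omega>. u0 x))))"
proof (intro conjI allI impI)
  fix \<beta> :: real and \<nu> :: nat
  assume "even \<nu> \<and> 2 \<le> \<nu>"
  then show "Nnorm M \<beta> \<nu> \<theta> (\<lambda>t x \<omega>. levy_semigroup p t u0 x)
      \<le> Nnorm M \<beta> \<nu> \<theta> (\<lambda>t x \<omega>. u0 x) *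
         ennreal_sqrt (SUP t\<in>{0..}. ennreal (exp (- \<beta> * t)) * (\<integral>\<^sup>+\<omega>. ennreal (\<theta> (X t \<omega>)) \<partial>M))"
    by (intro Nnorm_levy_semigroup_le[OF levy u0_meas u0_bdd wt]) simp
next
  fix c \<beta> :: real and \<nu> :: nat
  assume fin: "exp_moment M X c 1 < \<infinity>" and \<beta>: "ln (enn2real (exp_moment M X c 1)) < \<beta>"
    and \<nu>: "even \<nu> \<and> 2 \<le> \<nu>"
  have one: "exp_moment M X c 1 \<le> ennreal (exp \<beta>)"
    using ennreal_le_exp_if_ln_less[OF fin \<beta>] .
  have L: "levy_process M X" using symmetric_levy_levy_process[OF levy] .
  have "ennreal (exp (- \<beta> * t)) * exp_moment M X c t \<le> 1" if "0 \<le> t" for t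
  proof -
    have "ennreal (exp (- \<beta> * t)) * exp_moment M X c t \<le> ennreal (exp (- \<beta> * t)) * ennreal (exp (\<beta> * t))"
      by (intro mult_left_mono levy_process_exp_moment_le[OF L one that]) simp
    then show ?thesis by (simp add: ennreal_mult[symmetric] exp_add[symmetric])
  qed
  then have "ennreal_sqrt (SUP t\<in>{0..}. ennreal (exp (- \<beta> * t)) * exp_moment M X c t) \<le> 1"
    by (intro ennreal_sqrt_le_1 SUP_least) simp
  from mult_left_mono[OF this, of "Nnorm M \<beta> \<nu> (\<lambda>x. exp (c * x)) (\<lambda>t x \<omega>. u0 x)"]
  show "Nnorm M \<beta> \<nu> (\<lambda>x. exp (c * x)) (\<lambda>t x \<omega>. levy_semigroup p t u0 x)
      \<le> Nnorm M \<beta> \<nu> (\<lambda>x. exp (c * x)) (\<lambda>t x \<omega>. u0 x)"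
    using Nnorm_levy_semigroup_le[OF levy u0_meas u0_bdd weight_exp, of \<nu> \<beta> c] \<nu> by simp
qed

end
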